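(* If $X:\mathbb{R}\to L_0(\lambda,\mathbb{T})$ is a continuous homomorphism (a one-parameter subgroup), then there exists a unique $g\in L_0(\lambda,\mathbb{R})$ such that $X(t)=\exp(tg)$ for every $t\in\mathbb{R}$.
   Context: $\lambda$ is Lebesgue measure on $[0,1]$. $L_0(\lambda,\mathbb{R})$ is the space of measure classes of $\lambda$-measurable functions $[0,1]\to\mathbb{R}$, and $L_0(\lambda,\mathbb{T})$ the group under pointwise multiplication of measure classes of $\lambda$-measurable functions $[0,1]\to\mathbb{T}$ (circle group), both with the topology of convergence in measure. $\exp(f)=e^{if}$ pointwise. *)

theory Defs
  imports "HOL-Analysis.Analysis"
begin

text \<open>Lebesgue measure on [0,1]. Elements of L_0 are represented by measurable
representatives; equality in L_0 is equality almost everywhere.\<close>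

definition lam :: "real measure" where
  "lam = lebesgue_on {0..1}"

definition L0T_rep :: "(real \<Rightarrow> complex) \<Rightarrow> bool" where
  "L0T_rep f \<longleftrightarrow> f \<in> borel_measurable lam \<and> (\<forall>x\<in>space lam. cmod (f x) = 1)"

definition tendsto_in_measure ::
    "('b \<Rightarrow> real \<Rightarrow> 'a::metric_space) \<Rightarrow> (real \<Rightarrow> 'a) \<Rightarrow> 'b filter \<Rightarrow> bool" where
  "tendsto_in_measure f f0 F \<longleftrightarrow>
     (\<forall>e>0. ((\<lambda>s. measure lam {x\<in>space lam. dist (f s x) (f0 x) > e}) \<longlongrightarrow> 0) F)"

definition expi :: "(real \<Rightarrow> real) \<Rightarrow> real \<Rightarrow> complex" where
  "expi f = (\<lambda>x. exp (\<i> * complex_of_real (f x)))"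

end

theory Submission
  imports Defs
begin

text \<open>
  At the dyadic time \<open>2^{-m}\<close> write \<open>X(2^{-m}) = e^{i 2^{-m} r_m}\<close> with the angle
  \<open>2^{-m} r_m\<close> chosen in \<open>[-\<pi>,\<pi>]\<close>; the homomorphism property gives
  \<open>X(j 2^{-m}) = e^{i j 2^{-m} r_m}\<close> for all integers \<open>j\<close>.  For \<open>n < m\<close> the rates \<open>r_m, r_n\<close> can
  only differ where the level-\<open>m\<close> angle is large, and there the points \<open>X(k 2^{-m})\<close>,
  \<open>k = 1..K\<close>, are on average far from 1 (a Dirichlet-kernel estimate).  Since continuity
  makes \<open>X t\<close> close to 1 in \<open>L^2\<close> for small \<open>t\<close>, the disagreement sets \<open>{r_m \<noteq> r_n}\<close> have
  small measure, so by Borel--Cantelli a subsequence \<open>r_{r j}\<close> is almost everywhere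
  eventually constant, with limit \<open>g\<close>.  Approximating \<open>t\<close> by dyadic times, \<open>X t = e^{itg}\<close>
  follows from uniqueness of limits in measure; \<open>g\<close> is unique because \<open>e^{itg}\<close> for
  \<open>t = 1/(n+1)\<close> determines \<open>g\<close>.
\<close>

lemma space_lam [simp]: "space lam = {0..1}"
  by (simp add: lam_def)

interpretation lam: finite_measure lam
  unfolding lam_def by (rule finite_measure_lebesgue_on) auto

lemma measure_space_lam: "measure lam (space lam) = 1"
  unfolding lam_def by (simp add: measure_restrict_space)

lemma norm_exp_ii_minus_one_sq: "(cmod (exp (\<i> * of_real t) - 1))\<^sup>2 = 2 - 2 * cos t"
proof -
  have "(cmod (exp (\<i> * of_real t) - 1))\<^sup>2 = (cos t - 1)\<^sup>2 + (sin t)\<^sup>2"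
    by (simp add: cmod_power2 Re_exp Im_exp)
  also have "\<dots> = 2 - 2 * cos t"
    using sin_cos_squared_add[of t] by (simp add: power2_eq_square algebra_simps)
  finally show ?thesis .
qed

text \<open>A linear lower bound for \<open>sin\<close> near 0, since \<open>cos \<ge> 1/2\<close> on \<open>[0,1]\<close>.\<close>
lemma sin_ge_half_self:
  fixes y :: real assumes "0 \<le> y" "y \<le> 1" shows "y / 2 \<le> sin y"
proof -
  have cos_ge: "1/2 \<le> cos u" if "0 \<le> u" "u \<le> 1" for u :: real
  proof -
    have "cos (pi/3) \<le> cos u" using that pi_gt3 by (intro cos_monotone_0_pi_le) auto
    then show ?thesis by (simp add: cos_60)
  qed
  have "\<exists>d. ((\<lambda>x. sin x - x / 2) has_real_derivative d) (at u) \<and> 0 \<le> d"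
    if "0 \<le> u" "u \<le> y" for u
    using that assms cos_ge[of u]
    by (intro exI[of _ "cos u - 1/2"]) (auto intro!: derivative_eq_intros)
  from DERIV_nonneg_imp_nondecreasing[OF assms(1) this] show ?thesis by simp
qed

lemma dirichlet_cos_sum:
  "2 * sin (a/2) * (\<Sum>k=1..K. cos (real k * a)) = sin ((real K + 1/2) * a) - sin (a/2)"
proof (induction K)
  case 0
  then show ?case by simp
next
  case (Suc K)
  have prod_to_sum: "2 * sin (a/2) * cos b = sin (b + a/2) - sin (b - a/2)" for b
    by (simp add: sin_add sin_diff)
  have "(real K + 1/2) * a = real (Suc K) * a - a/2"
    and "(real (Suc K) + 1/2) * a = real (Suc K) * a + a/2"
    by (simp_all add: algebra_simps)
  then show ?case
    using Suc prod_to_sum[of "real (Suc K) * a"] by (simp add: algebra_simps)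
qed

text \<open>If \<open>a \<le> |\<alpha>| \<le> \<pi>\<close>, the points \<open>e^{ik\<alpha>}\<close>, \<open>k = 1..K\<close>, stay on average far from 1
  once \<open>K a \<ge> 8\<close>: the Dirichlet kernel bounds the cosine sum by \<open>1/|sin(\<alpha>/2)| \<le> 4/a\<close>.\<close>
lemma sum_norm_exp_ii_minus_one_sq_ge:
  fixes \<alpha> a :: real and K :: nat
  assumes "0 < a" "a \<le> 2" "a \<le> \<bar>\<alpha>\<bar>" "\<bar>\<alpha>\<bar> \<le> pi" "8 \<le> real K * a"
  shows "real K \<le> (\<Sum>k=1..K. (cmod (exp (\<i> * of_real (real k * \<alpha>)) - 1))\<^sup>2)"
proof -
  define S where "S = (\<Sum>k=1..K. cos (real k * \<alpha>))"
  have sum_eq: "(\<Sum>k=1..K. (cmod (exp (\<i> * of_real (real k * \<alpha>)) - 1))\<^sup>2) = 2 * real K - 2 * S"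
    unfolding S_def norm_exp_ii_minus_one_sq by (simp add: sum_subtractf sum_distrib_left)
  have "\<bar>sin (\<alpha>/2)\<bar> = sin (\<bar>\<alpha>\<bar>/2)"
  proof (cases "0 \<le> \<alpha>")
    case False
    have "0 \<le> sin (- \<alpha> / 2)" using assms(4) False by (intro sin_ge_zero) auto
    then show ?thesis using False by (simp add: abs_if)
  qed (use assms(4) in \<open>auto simp: sin_ge_zero\<close>)
  also have "sin (a/2) \<le> sin (\<bar>\<alpha>\<bar>/2)"
    using assms by (intro sin_monotone_2pi_le) auto
  moreover have "a/4 \<le> sin (a/2)"
    using sin_ge_half_self[of "a/2"] assms by simp
  ultimately have sin_lb: "a/4 \<le> \<bar>sin (\<alpha>/2)\<bar>" by linarith
  have "\<bar>2 * sin (\<alpha>/2) * S\<bar> \<le> 2"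
    unfolding S_def dirichlet_cos_sum
    using abs_sin_le_one[of "(real K + 1/2) * \<alpha>"] abs_sin_le_one[of "\<alpha>/2"] by linarith
  then have "a/4 * \<bar>S\<bar> \<le> 1"
    using mult_right_mono[OF sin_lb abs_ge_zero, of S] by (simp add: abs_mult)
  then have "a * S \<le> 4"
    using assms(1) mult_left_mono[OF abs_ge_self[of S], of a] by linarith
  then have "a * S \<le> a * (real K / 2)"
    using assms(5) by (simp add: algebra_simps)
  then have "S \<le> real K / 2"
    using assms(1) by simp
  then show ?thesis
    unfolding sum_eq by linarith
qed

lemma exp_ii_eq_imp_dist_ge_2pi:
  assumes "exp (\<i> * of_real u) = exp (\<i> * of_real v)" "u \<noteq> v"
  shows "2 * pi \<le> \<bar>u - v\<bar>"
proof -
  have "exp (\<i> * of_real (u - v)) = 1"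
    using assms(1) by (simp add: algebra_simps exp_diff)
  then obtain n :: int where n: "u - v = of_int (2 * n) * pi"
    by (auto simp: exp_eq_1)
  with assms(2) have "n \<noteq> 0"
    by auto
  then have "1 \<le> \<bar>real_of_int n\<bar>"
    by linarith
  then show ?thesis
    unfolding n by (simp add: abs_mult)
qed

lemma exp_ii_scaled_eq_imp_eq:
  assumes "\<And>n::nat. exp (\<i> * of_real (u / real (Suc n))) = exp (\<i> * of_real (v / real (Suc n)))"
  shows "u = v"
proof (rule ccontr)
  assume "u \<noteq> v"
  obtain n :: nat where n: "\<bar>u - v\<bar> < real n"
    using reals_Archimedean2 by blast
  have "u / real (Suc n) \<noteq> v / real (Suc n)"
    using \<open>u \<noteq> v\<close> by simp
  with assms[of n] have "2 * pi \<le> \<bar>u / real (Suc n) - v / real (Suc n)\<bar>"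
    by (rule exp_ii_eq_imp_dist_ge_2pi)
  also have "\<dots> = \<bar>u - v\<bar> / real (Suc n)"
    by (simp add: diff_divide_distrib[symmetric])
  also have "\<dots> < 1"
    using n by simp
  finally show False
    using pi_gt3 by linarith
qed

text \<open>A measurable choice of angle in \<open>[-\<pi>,\<pi>]\<close> for points of the unit circle.\<close>
definition circle_angle :: "complex \<Rightarrow> real" where
  "circle_angle z = (if 0 \<le> Im z then 1 else -1) * arccos (max (-1) (min 1 (Re z)))"

lemma circle_angle_measurable [measurable]: "circle_angle \<in> borel_measurable borel"
proof -
  have "continuous_on UNIV (\<lambda>z::complex. arccos (max (-1) (min 1 (Re z))))"
    by (intro continuous_on_compose2[OF continuous_on_arccos'] continuous_intros) auto
  then have "(\<lambda>z::complex. arccos (max (-1) (min 1 (Re z)))) \<in> borel_measurable borel"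
    by (rule borel_measurable_continuous_onI)
  then show ?thesis
    unfolding circle_angle_def by measurable
qed

lemma abs_circle_angle_le_pi: "\<bar>circle_angle z\<bar> \<le> pi"
  unfolding circle_angle_def
  using arccos_lbound[of "max (-1) (min 1 (Re z))"] arccos_ubound[of "max (-1) (min 1 (Re z))"]
  by (auto simp: abs_mult)

lemma exp_circle_angle:
  assumes "cmod z = 1"
  shows "exp (\<i> * of_real (circle_angle z)) = z"
proof -
  have re: "\<bar>Re z\<bar> \<le> 1"
    using abs_Re_le_cmod assms by metis
  then have clip: "max (-1) (min 1 (Re z)) = Re z"
    by auto
  have "(Re z)\<^sup>2 + (Im z)\<^sup>2 = 1"
    using assms by (metis cmod_power2 one_power2)
  then have im: "sqrt (1 - (Re z)\<^sup>2) = \<bar>Im z\<bar>"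
    by (metis add_diff_cancel_left' real_sqrt_abs)
  show ?thesis
    by (rule complex_eqI)
       (use re im in \<open>auto simp: circle_angle_def clip Re_exp Im_exp cos_arccos_abs sin_arccos\<close>)
qed

text \<open>Convergence in measure at \<open>t\<close> to the value at \<open>t\<close> is the same as convergence
  along the full neighbourhood filter, since at \<open>s = t\<close> the exceptional set is empty.\<close>
lemma tendsto_in_measure_at_imp_nhds:
  fixes f :: "'b::topological_space \<Rightarrow> real \<Rightarrow> 'a::metric_space"
  assumes "tendsto_in_measure f (f t) (at t)"
  shows "tendsto_in_measure f (f t) (nhds t)"
  unfolding tendsto_in_measure_def
proof (intro allI impI)
  fix e :: real assume "e > 0"
  define \<Phi> where "\<Phi> s = measure lam {x\<in>space lam. dist (f s x) (f t x) > e}" for s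
  have "\<Phi> t = 0"
    using \<open>e > 0\<close> by (simp add: \<Phi>_def)
  moreover have "(\<Phi> \<longlongrightarrow> 0) (at t)"
    using assms \<open>e > 0\<close> unfolding tendsto_in_measure_def \<Phi>_def by blast
  ultimately show "(\<Phi> \<longlongrightarrow> 0) (nhds t)"
    using tendsto_at_iff_tendsto_nhds[of \<Phi> t] by simp
qed

lemma tendsto_in_measure_compose:
  assumes "tendsto_in_measure f f0 F" "filterlim g F G"
  shows "tendsto_in_measure (\<lambda>k. f (g k)) f0 G"
  using assms unfolding tendsto_in_measure_def by (auto intro: filterlim_compose)

text \<open>Almost everywhere convergence implies convergence in measure (\<open>lam\<close> is finite):
  dominated convergence applied to the indicators of the exceptional sets.\<close>
lemma AE_tendsto_imp_tendsto_in_measure: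
  fixes f :: "nat \<Rightarrow> real \<Rightarrow> 'a::{metric_space, second_countable_topology}"
  assumes [measurable]: "\<And>k. f k \<in> borel_measurable lam" "f0 \<in> borel_measurable lam"
    and lim: "AE x in lam. (\<lambda>k. f k x) \<longlonglongrightarrow> f0 x"
  shows "tendsto_in_measure f f0 sequentially"
  unfolding tendsto_in_measure_def
proof (intro allI impI)
  fix e :: real assume "e > 0"
  define S where "S k = {x\<in>space lam. dist (f k x) (f0 x) > e}" for k
  have [measurable]: "S k \<in> sets lam" for k
    unfolding S_def by measurable
  have "(\<lambda>k. \<integral>x. indicator (S k) x \<partial>lam) \<longlonglongrightarrow> (\<integral>x. (0::real) \<partial>lam)"
  proof (rule integral_dominated_convergence[where w="\<lambda>x. 1"])
    show "AE x in lam. (\<lambda>k. indicator (S k) x) \<longlonglongrightarrow> (0::real)"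
      using lim
    proof eventually_elim
      case (elim x)
      from tendstoD[OF elim \<open>e > 0\<close>]
      have "eventually (\<lambda>k. indicator (S k) x = (0::real)) sequentially"
        by eventually_elim (auto simp: S_def)
      then show ?case
        by (rule tendsto_eventually)
    qed
    show "AE x in lam. norm (indicator (S k) x :: real) \<le> 1" for k
      by (simp add: indicator_def)
  qed simp_all
  moreover have "S k \<inter> space lam = S k" for k
    by (auto simp: S_def)
  ultimately show "(\<lambda>k. measure lam (S k)) \<longlonglongrightarrow> 0"
    by (simp del: space_lam)
qed

text \<open>Two limits in measure of the same family are \<open>2e\<close>-close almost everywhere, for every
  \<open>e > 0\<close>: by the triangle inequality, \<open>{d(f_1,f_2) > 2e}\<close> is covered by the two exceptional
  sets of measure tending to 0.\<close>
lemma tendsto_in_measure_limits_close: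
  fixes f :: "'b \<Rightarrow> real \<Rightarrow> 'a::{metric_space, second_countable_topology}"
  assumes [measurable]: "\<And>s. f s \<in> borel_measurable lam"
    "f1 \<in> borel_measurable lam" "f2 \<in> borel_measurable lam"
    and F: "F \<noteq> bot"
    and lim1: "tendsto_in_measure f f1 F" and lim2: "tendsto_in_measure f f2 F"
    and "e > 0"
  shows "AE x in lam. dist (f1 x) (f2 x) \<le> 2 * e"
proof -
  define T1 where "T1 s = {x\<in>space lam. dist (f s x) (f1 x) > e}" for s
  define T2 where "T2 s = {x\<in>space lam. dist (f s x) (f2 x) > e}" for s
  define Z where "Z = {x\<in>space lam. dist (f1 x) (f2 x) > 2 * e}"
  have [measurable]: "Z \<in> sets lam"
    unfolding Z_def by measurable
  have T_sets: "T1 s \<in> sets lam" "T2 s \<in> sets lam" for s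
  proof -
    have "(\<lambda>x. dist (f s x) (f1 x)) -` {e<..} \<inter> space lam \<in> sets lam"
      "(\<lambda>x. dist (f s x) (f2 x)) -` {e<..} \<inter> space lam \<in> sets lam"
      by (intro measurable_sets[OF borel_measurable_dist] assms; simp)+
    then show "T1 s \<in> sets lam" "T2 s \<in> sets lam"
      unfolding T1_def T2_def by (simp_all add: vimage_def Int_def conj_commute)
  qed
  have bound: "measure lam Z \<le> measure lam (T1 s) + measure lam (T2 s)" for s
  proof -
    have "Z \<subseteq> T1 s \<union> T2 s"
    proof
      fix x assume "x \<in> Z"
      then show "x \<in> T1 s \<union> T2 s"
        using dist_triangle3[of "f1 x" "f2 x" "f s x"] by (auto simp: Z_def T1_def T2_def)
    qed
    then have "measure lam Z \<le> measure lam (T1 s \<union> T2 s)"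
      by (intro lam.finite_measure_mono) (auto simp: T_sets)
    also have "\<dots> \<le> measure lam (T1 s) + measure lam (T2 s)"
      by (rule measure_Un_le) (auto simp: T_sets)
    finally show ?thesis .
  qed
  have "((\<lambda>s. measure lam (T1 s) + measure lam (T2 s)) \<longlongrightarrow> 0 + 0) F"
    using lim1 lim2 \<open>e > 0\<close> unfolding tendsto_in_measure_def T1_def T2_def
    by (intro tendsto_add) auto
  then have "measure lam Z \<le> 0"
    using F bound by (intro tendsto_lowerbound[where a="measure lam Z"]) auto
  then have "emeasure lam Z = 0"
    by (simp add: lam.emeasure_eq_measure antisym)
  then show ?thesis
    by (subst AE_iff_measurable[OF \<open>Z \<in> sets lam\<close>]) (auto simp: Z_def)
qed

lemma tendsto_in_measure_unique:
  fixes f :: "'b \<Rightarrow> real \<Rightarrow> 'a::{metric_space, second_countable_topology}"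
  assumes "\<And>s. f s \<in> borel_measurable lam"
    "f1 \<in> borel_measurable lam" "f2 \<in> borel_measurable lam"
    and "F \<noteq> bot" and "tendsto_in_measure f f1 F" "tendsto_in_measure f f2 F"
  shows "AE x in lam. f1 x = f2 x"
proof -
  have "AE x in lam. \<forall>n::nat. dist (f1 x) (f2 x) \<le> 2 * inverse (real (Suc n))"
    using tendsto_in_measure_limits_close[OF assms] by (subst AE_all_countable) simp
  then show ?thesis
  proof eventually_elim
    case (elim x)
    show ?case
    proof (rule ccontr)
      assume "f1 x \<noteq> f2 x"
      then obtain n where "inverse (real (Suc n)) < dist (f1 x) (f2 x) / 2"
        using reals_Archimedean[of "dist (f1 x) (f2 x) / 2"] by auto
      with elim[rule_format, of n] show False
        by simp
    qed
  qed
qed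

lemma (in finite_measure) AE_eventually_eq_lim:
  fixes f :: "nat \<Rightarrow> 'a \<Rightarrow> real"
  assumes [measurable]: "\<And>j. f j \<in> borel_measurable M"
    and summable: "summable (\<lambda>j. measure M {x\<in>space M. f (Suc j) x \<noteq> f j x})"
  shows "AE x in M. eventually (\<lambda>j. f j x = lim (\<lambda>j. f j x)) sequentially"
proof -
  have "AE x in M. eventually (\<lambda>j. x \<in> space M - {x\<in>space M. f (Suc j) x \<noteq> f j x}) sequentially"
    by (rule borel_cantelli_AE1[OF _ _ summable]) (measurable, simp add: emeasure_eq_measure)
  then show ?thesis
  proof eventually_elim
    case (elim x)
    then obtain J where J: "\<And>j. J \<le> j \<Longrightarrow> f (Suc j) x = f j x"
      unfolding eventually_sequentially by auto
    have const: "f j x = f J x" if "J \<le> j" for j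
      using that
    proof (induction j rule: dec_induct)
      case (step j)
      then show ?case using J[of j] by simp
    qed simp
    then have ev: "eventually (\<lambda>j. f j x = f J x) sequentially"
      unfolding eventually_sequentially by blast
    then have "lim (\<lambda>j. f j x) = f J x"
      by (intro limI tendsto_eventually)
    with ev show ?case
      by simp
  qed
qed

lemma (in finite_measure) disagreement_Cauchy_imp_stable_subseq:
  fixes f :: "nat \<Rightarrow> 'a \<Rightarrow> real"
  assumes [measurable]: "\<And>n. f n \<in> borel_measurable M"
    and Cauchy: "\<And>\<eta>. \<eta> > 0 \<Longrightarrow> \<exists>N. \<forall>n\<ge>N. \<forall>m\<ge>n. measure M {x\<in>space M. f m x \<noteq> f n x} \<le> \<eta>"
  obtains r where "strict_mono r"
    "AE x in M. eventually (\<lambda>j. f (r j) x = lim (\<lambda>j. f (r j) x)) sequentially"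
proof -
  have "\<forall>j. \<exists>N. \<forall>n\<ge>N. \<forall>m\<ge>n. measure M {x\<in>space M. f m x \<noteq> f n x} \<le> (1/2)^j"
    using Cauchy by simp
  then obtain N where "\<forall>j. \<forall>n\<ge>N j. \<forall>m\<ge>n. measure M {x\<in>space M. f m x \<noteq> f n x} \<le> (1/2)^j"
    by (auto dest: choice)
  then have N: "\<And>j n m. N j \<le> n \<Longrightarrow> n \<le> m \<Longrightarrow>
      measure M {x\<in>space M. f m x \<noteq> f n x} \<le> (1/2)^j"
    by blast
  define r where "r j = (\<Sum>i\<le>j. N i) + j" for j
  have r_mono: "strict_mono r"
    by (rule strict_monoI_Suc) (simp add: r_def)
  have "N j \<le> r j" for j
    using member_le_sum[of j "{..j}" N] by (simp add: r_def)
  moreover have "r j \<le> r (Suc j)" for j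
    using r_mono by (simp add: strict_mono_less_eq)
  ultimately have "measure M {x\<in>space M. f (r (Suc j)) x \<noteq> f (r j) x} \<le> (1/2)^j" for j
    by (rule N)
  then have "summable (\<lambda>j. measure M {x\<in>space M. f (r (Suc j)) x \<noteq> f (r j) x})"
    by (intro summable_comparison_test'[OF summable_geometric[of "1/2"], where N=0]) simp_all
  then have "AE x in M. eventually (\<lambda>j. f (r j) x = lim (\<lambda>j. f (r j) x)) sequentially"
    by (intro AE_eventually_eq_lim) simp
  with r_mono show ?thesis
    by (rule that)
qed

lemma dyadic_floor_tendsto:
  fixes t :: real
  assumes "strict_mono r"
  shows "(\<lambda>k. of_int \<lfloor>t * 2^(r k)\<rfloor> * (1/2)^(r k)) \<longlonglongrightarrow> t"
proof -
  define tk :: "nat \<Rightarrow> real" where "tk k = of_int \<lfloor>t * 2^(r k)\<rfloor> * (1/2)^(r k)" for k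
  have tk_bounds: "t - (1/2)^(r k) \<le> tk k \<and> tk k \<le> t" for k
  proof -
    define p :: real where "p = 2^(r k)"
    have "p > 0" "tk k = of_int \<lfloor>t * p\<rfloor> / p"
      by (simp_all add: p_def tk_def power_one_over)
    moreover have "(t * p - 1) / p \<le> of_int \<lfloor>t * p\<rfloor> / p" "of_int \<lfloor>t * p\<rfloor> / p \<le> t * p / p"
      using \<open>p > 0\<close> by (intro divide_right_mono; linarith)+
    ultimately show ?thesis
      by (simp add: diff_divide_distrib p_def power_one_over)
  qed
  have "(\<lambda>k. (1/2::real)^(r k)) \<longlonglongrightarrow> 0"
    using LIMSEQ_subseq_LIMSEQ[OF LIMSEQ_power_zero[of "1/2::real"] assms] by (simp add: o_def)
  from tendsto_diff[OF tendsto_const this, of t]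
  have lower_lim: "(\<lambda>k. t - (1/2)^(r k)) \<longlonglongrightarrow> t"
    by simp
  have "tk \<longlonglongrightarrow> t"
    by (intro tendsto_sandwich[OF _ _ lower_lim tendsto_const]) (simp_all add: tk_bounds)
  then show ?thesis
    unfolding tk_def[abs_def] .
qed

lemma AE_exponent_unique:
  assumes "\<And>t. AE x in M. exp (\<i> * of_real (t * u x)) = exp (\<i> * of_real (t * v x))"
  shows "AE x in M. u x = v x"
proof -
  have "AE x in M. \<forall>n::nat. exp (\<i> * of_real (1 / real (Suc n) * u x))
                        = exp (\<i> * of_real (1 / real (Suc n) * v x))"
    using assms by (subst AE_all_countable) blast
  then show ?thesis
  proof eventually_elim
    case (elim x)
    show ?case
    proof (rule exp_ii_scaled_eq_imp_eq)
      fix n :: nat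
      show "exp (\<i> * of_real (u x / real (Suc n))) = exp (\<i> * of_real (v x / real (Suc n)))"
        using elim[rule_format, of n] by simp
    qed
  qed
qed


locale L0T_one_parameter_subgroup =
  fixes X :: "real \<Rightarrow> real \<Rightarrow> complex"
  assumes rep: "\<And>t. L0T_rep (X t)"
    and hom: "\<And>s t. AE x in lam. X (s + t) x = X s x * X t x"
    and cont: "\<And>t. tendsto_in_measure X (X t) (at t)"
begin

lemma X_measurable [measurable]: "X t \<in> borel_measurable lam"
  using rep[of t] unfolding L0T_rep_def by blast

lemma norm_X: "x \<in> space lam \<Longrightarrow> cmod (X t x) = 1"
  using rep[of t] unfolding L0T_rep_def by blast

lemma norm_X_minus_one_sq_le: "x \<in> space lam \<Longrightarrow> (cmod (X t x - 1))\<^sup>2 \<le> 4"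
proof -
  assume "x \<in> space lam"
  have "cmod (X t x - 1) \<le> cmod (X t x) + 1"
    by (metis norm_triangle_ineq4 norm_one)
  then have "cmod (X t x - 1) \<le> 2"
    using norm_X[OF \<open>x \<in> space lam\<close>] by simp
  then show ?thesis
    using power_mono[of "cmod (X t x - 1)" 2 2] by simp
qed

lemma integrable_X_dist_sq: "integrable lam (\<lambda>x. (cmod (X t x - 1))\<^sup>2)"
  by (rule lam.integrable_const_bound[where B=4]) (auto intro: AE_I2 norm_X_minus_one_sq_le)

lemma X_zero: "AE x in lam. X 0 x = 1"
  using hom[of 0 0] AE_space
proof eventually_elim
  case (elim x)
  then have "X 0 x \<noteq> 0"
    using norm_X[of x 0] by auto
  with elim show ?case
    by (metis add_0 mult_cancel_left2)
qed

lemma X_nat_multiple: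
  assumes "AE x in lam. X s x = exp (\<i> * of_real (s * \<theta> x))"
  shows "AE x in lam. X (real n * s) x = exp (\<i> * of_real (real n * s * \<theta> x))"
proof (induction n)
  case 0
  then show ?case using X_zero by simp
next
  case (Suc n)
  show ?case
    using Suc assms hom[of "real n * s" s]
  proof eventually_elim
    case (elim x)
    have "X (real (Suc n) * s) x = X (real n * s + s) x"
      by (simp add: algebra_simps)
    also have "\<dots> = exp (\<i> * of_real (real n * s * \<theta> x) + \<i> * of_real (s * \<theta> x))"
      using elim by (simp add: exp_add)
    also have "\<dots> = exp (\<i> * of_real (real (Suc n) * s * \<theta> x))"
      by (simp add: algebra_simps)
    finally show ?case .
  qed
qed

lemma X_int_multiple:
  assumes "AE x in lam. X s x = exp (\<i> * of_real (s * \<theta> x))"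
  shows "AE x in lam. X (of_int j * s) x = exp (\<i> * of_real (of_int j * s * \<theta> x))"
proof (cases "0 \<le> j")
  case True
  then obtain n where "j = int n"
    by (metis nonneg_int_cases)
  then show ?thesis
    using X_nat_multiple[OF assms, of n] by simp
next
  case False
  then obtain n where j: "j = - int n"
    by (metis linorder_not_le neg_int_cases order_less_imp_le)
  show ?thesis
    using X_nat_multiple[OF assms, of n] hom[of "- (real n * s)" "real n * s"] X_zero
  proof eventually_elim
    case (elim x)
    then have "X (- (real n * s)) x * exp (\<i> * of_real (real n * s * \<theta> x)) = 1"
      by simp
    then have "X (- (real n * s)) x = inverse (exp (\<i> * of_real (real n * s * \<theta> x)))"
      by (metis inverse_unique mult.commute)
    then show ?case
      using j by (simp add: exp_minus[symmetric])
  qed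
qed

text \<open>The angular rate of \<open>X\<close> read off at the dyadic time \<open>2^{-m}\<close>: \<open>X(2^{-m}) = e^{i 2^{-m} r_m}\<close>
  with \<open>|2^{-m} r_m| \<le> \<pi>\<close>.\<close>
definition dyadic_rate :: "nat \<Rightarrow> real \<Rightarrow> real" where
  "dyadic_rate m x = 2^m * circle_angle (X ((1/2)^m) x)"

lemma dyadic_rate_measurable [measurable]: "dyadic_rate m \<in> borel_measurable lam"
  unfolding dyadic_rate_def by measurable

lemma scaled_dyadic_rate: "(1/2)^m * dyadic_rate m x = circle_angle (X ((1/2)^m) x)"
  by (simp add: dyadic_rate_def power_one_over)

lemma abs_scaled_dyadic_rate_le: "\<bar>(1/2)^m * dyadic_rate m x\<bar> \<le> pi"
  unfolding scaled_dyadic_rate by (rule abs_circle_angle_le_pi)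

lemma X_dyadic_grid:
  "AE x in lam. X (of_int j * (1/2)^m) x = exp (\<i> * of_real (of_int j * (1/2)^m * dyadic_rate m x))"
proof (rule X_int_multiple, rule AE_I2)
  fix x assume "x \<in> space lam"
  then show "X ((1/2)^m) x = exp (\<i> * of_real ((1/2)^m * dyadic_rate m x))"
    unfolding scaled_dyadic_rate by (simp add: exp_circle_angle norm_X)
qed

lemma small_time_L2:
  assumes "\<eta> > 0"
  shows "\<exists>\<delta>>0. \<forall>t. 0 < t \<longrightarrow> t \<le> \<delta> \<longrightarrow> (\<integral>x. (cmod (X t x - 1))\<^sup>2 \<partial>lam) \<le> \<eta>"
proof -
  define e where "e = min 1 (\<eta>/2)"
  have "e > 0" "e\<^sup>2 \<le> \<eta>/2"
    using assms by (auto simp: e_def power2_eq_square min_def intro: order_trans[OF mult_left_le])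
  have "((\<lambda>s. measure lam {x\<in>space lam. dist (X s x) (X 0 x) > e}) \<longlongrightarrow> 0) (at 0)"
    using cont[of 0] \<open>e > 0\<close> unfolding tendsto_in_measure_def by blast
  then have "eventually (\<lambda>s. measure lam {x\<in>space lam. dist (X s x) (X 0 x) > e} < \<eta>/8) (at 0)"
    using assms by (intro order_tendstoD(2)) auto
  then obtain \<delta> where "\<delta> > 0" and \<delta>: "\<And>s. s \<noteq> 0 \<Longrightarrow> \<bar>s\<bar> < \<delta> \<Longrightarrow>
      measure lam {x\<in>space lam. dist (X s x) (X 0 x) > e} < \<eta>/8"
    unfolding eventually_at by (auto simp: dist_real_def)
  show ?thesis
  proof (intro exI[of _ "\<delta>/2"] conjI allI impI)
    fix t :: real assume t: "0 < t" "t \<le> \<delta>/2"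
    define A where "A = {x\<in>space lam. dist (X t x) (X 0 x) > e}"
    have [measurable]: "A \<in> sets lam"
      unfolding A_def by measurable
    have "measure lam A < \<eta>/8"
      unfolding A_def using \<delta> t \<open>\<delta> > 0\<close> by simp
    have pointwise: "AE x in lam. (cmod (X t x - 1))\<^sup>2 \<le> e\<^sup>2 + 4 * indicator A x"
      using X_zero AE_space
    proof eventually_elim
      case (elim x)
      show ?case
      proof (cases "x \<in> A")
        case True
        then show ?thesis
          using norm_X_minus_one_sq_le[OF elim(2), of t] by (simp add: add_increasing)
      next
        case False
        then have "cmod (X t x - 1) \<le> e"
          using elim unfolding A_def by (simp add: dist_norm)
        then have "(cmod (X t x - 1))\<^sup>2 \<le> e\<^sup>2"
          by (intro power_mono) auto
        then show ?thesis using False by simp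
      qed
    qed
    have int_A: "integrable lam (\<lambda>x. 4 * indicator A x :: real)"
      by (intro integrable_mult_right integrable_real_indicator) (auto simp: lam.emeasure_eq_measure)
    have "(\<integral>x. (cmod (X t x - 1))\<^sup>2 \<partial>lam) \<le> (\<integral>x. e\<^sup>2 + 4 * indicator A x \<partial>lam)"
      using integrable_X_dist_sq int_A pointwise by (intro integral_mono_AE) auto
    also have "\<dots> = e\<^sup>2 * measure lam (space lam) + 4 * measure lam A"
      using int_A \<open>A \<in> sets lam\<close> by (simp add: integral_add Int_absorb2 sets.sets_into_space del: space_lam)
    also have "\<dots> \<le> \<eta>"
      using measure_space_lam \<open>e\<^sup>2 \<le> \<eta>/2\<close> \<open>measure lam A < \<eta>/8\<close> by simp
    finally show "(\<integral>x. (cmod (X t x - 1))\<^sup>2 \<partial>lam) \<le> \<eta>" .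
  qed (use \<open>\<delta> > 0\<close> in simp)
qed

text \<open>If the rates at dyadic levels \<open>n \<le> m\<close> differ, the two angles at time \<open>2^{-n}\<close> differ by
  a nonzero multiple of \<open>2\<pi>\<close>; as the level-\<open>n\<close> angle lies in \<open>[-\<pi>,\<pi>]\<close>, the level-\<open>m\<close>
  angle at time \<open>2^{-n}\<close> has modulus at least \<open>\<pi>\<close>, i.e. at time \<open>2^{-m}\<close> at least \<open>\<pi> 2^{n-m}\<close>.\<close>
lemma dyadic_rate_disagreement:
  assumes "n \<le> m"
  shows "measure lam {x\<in>space lam. dyadic_rate m x \<noteq> dyadic_rate n x}
         \<le> measure lam {x\<in>space lam. pi * (1/2)^(m-n) \<le> \<bar>(1/2)^m * dyadic_rate m x\<bar>}"
proof (rule lam.finite_measure_mono_AE)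
  have "(2::real)^(m-n) = 2^m / 2^n"
    using assms by (simp add: power_diff)
  then have scale: "of_int (2^(m-n)) * (1/2::real)^m = (1/2)^n"
    by (simp add: power_one_over)
  have split: "(1/2::real)^m = (1/2)^(m-n) * (1/2)^n"
    using assms by (simp flip: power_add)
  show "AE x in lam. x \<in> {x\<in>space lam. dyadic_rate m x \<noteq> dyadic_rate n x}
          \<longrightarrow> x \<in> {x\<in>space lam. pi * (1/2)^(m-n) \<le> \<bar>(1/2)^m * dyadic_rate m x\<bar>}"
    using X_dyadic_grid[of "2^(m-n)" m] X_dyadic_grid[of 1 n]
  proof eventually_elim
    case (elim x)
    show ?case
    proof (intro impI CollectI conjI; elim CollectE conjE)
      assume "x \<in> space lam" "dyadic_rate m x \<noteq> dyadic_rate n x"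
      then have "(1/2)^n * dyadic_rate m x \<noteq> (1/2)^n * dyadic_rate n x"
        by simp
      moreover have "exp (\<i> * of_real ((1/2)^n * dyadic_rate m x))
                   = exp (\<i> * of_real ((1/2)^n * dyadic_rate n x))"
        using elim unfolding scale by simp
      ultimately have "2 * pi \<le> \<bar>(1/2)^n * dyadic_rate m x - (1/2)^n * dyadic_rate n x\<bar>"
        by (intro exp_ii_eq_imp_dist_ge_2pi)
      then have "pi \<le> (1/2)^n * \<bar>dyadic_rate m x\<bar>"
        using abs_scaled_dyadic_rate_le[of n x]
          abs_triangle_ineq4[of "(1/2)^n * dyadic_rate m x" "(1/2)^n * dyadic_rate n x"]
        by (simp add: abs_mult)
      from mult_left_mono[OF this, of "(1/2)^(m-n)"]
      show "pi * (1/2)^(m-n) \<le> \<bar>(1/2)^m * dyadic_rate m x\<bar>"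
        by (simp add: split abs_mult mult.commute mult.left_commute)
    qed
  qed
qed measurable

text \<open>Points where the angle at time \<open>2^{-m}\<close> is at least \<open>a\<close> form a set of small measure: on it,
  the averaged \<open>L^2\<close> distances of \<open>X(k 2^{-m})\<close> from 1, \<open>k = 1..K\<close>, are at least 1.\<close>
lemma large_angle_measure_le:
  assumes "0 < a" "a \<le> 2" "8 \<le> real K * a"
  shows "measure lam {x\<in>space lam. a \<le> \<bar>(1/2)^m * dyadic_rate m x\<bar>} * real K
         \<le> (\<Sum>k=1..K. \<integral>x. (cmod (X (real k * (1/2)^m) x - 1))\<^sup>2 \<partial>lam)"
proof -
  define B where "B = {x\<in>space lam. a \<le> \<bar>(1/2)^m * dyadic_rate m x\<bar>}"
  have [measurable]: "B \<in> sets lam"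
    unfolding B_def by measurable
  have "AE x in lam. \<forall>k::nat. X (real k * (1/2)^m) x
          = exp (\<i> * of_real (real k * ((1/2)^m * dyadic_rate m x)))"
    using X_dyadic_grid[of "int k" m for k] by (subst AE_all_countable) (simp add: mult.assoc)
  then have pointwise: "AE x in lam. indicator B x * real K
          \<le> (\<Sum>k=1..K. (cmod (X (real k * (1/2)^m) x - 1))\<^sup>2)"
  proof eventually_elim
    case (elim x)
    show ?case
    proof (cases "x \<in> B")
      case True
      then have "real K \<le> (\<Sum>k=1..K. (cmod (exp (\<i> * of_real (real k * ((1/2)^m * dyadic_rate m x)))
                                           - 1))\<^sup>2)"
        using assms abs_scaled_dyadic_rate_le[of m x]
        by (intro sum_norm_exp_ii_minus_one_sq_ge[where a=a]) (auto simp: B_def)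
      with True show ?thesis
        by (simp add: elim)
    qed (simp add: sum_nonneg)
  qed
  have "measure lam B * real K = (\<integral>x. indicator B x * real K \<partial>lam)"
    using sets.sets_into_space[OF \<open>B \<in> sets lam\<close>] by (simp add: Int_absorb2 del: space_lam)
  also have "\<dots> \<le> (\<integral>x. (\<Sum>k=1..K. (cmod (X (real k * (1/2)^m) x - 1))\<^sup>2) \<partial>lam)"
    using pointwise integrable_X_dist_sq
    by (intro integral_mono_AE integrable_sum integrable_mult_left integrable_real_indicator)
       (auto simp: lam.emeasure_eq_measure)
  also have "\<dots> = (\<Sum>k=1..K. \<integral>x. (cmod (X (real k * (1/2)^m) x - 1))\<^sup>2 \<partial>lam)"
    by (simp add: integrable_X_dist_sq)
  finally show ?thesis
    unfolding B_def .
qed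

text \<open>If \<open>X t\<close> is \<open>\<eta>\<close>-close to 1 in \<open>L^2\<close> for \<open>0 < t \<le> 4 \<cdot> 2^{-n}\<close>, the rates at levels
  \<open>n \<le> m\<close> differ on a set of measure at most \<open>\<eta>\<close>: apply the previous two lemmas with
  \<open>a = \<pi> 2^{n-m}\<close> and \<open>K = 4 \<cdot> 2^{m-n}\<close>, so that \<open>K a = 4\<pi>\<close> and \<open>K 2^{-m} = 4 \<cdot> 2^{-n}\<close>.\<close>
lemma dyadic_rate_disagreement_small:
  assumes "n \<le> m"
    and L2: "\<And>t. 0 < t \<Longrightarrow> t \<le> 4 * (1/2)^n \<Longrightarrow> (\<integral>x. (cmod (X t x - 1))\<^sup>2 \<partial>lam) \<le> \<eta>"
  shows "measure lam {x\<in>space lam. dyadic_rate m x \<noteq> dyadic_rate n x} \<le> \<eta>"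
proof (cases "m = n")
  case True
  have "0 \<le> (\<integral>x. (cmod (X (4 * (1/2)^n) x - 1))\<^sup>2 \<partial>lam)"
    by (rule integral_nonneg_AE) simp
  also have "\<dots> \<le> \<eta>"
    by (rule L2) simp_all
  finally show ?thesis
    using True by simp
next
  case False
  define a where "a = pi * (1/2)^(m-n)"
  define K :: nat where "K = 4 * 2^(m-n)"
  have "(1/2::real)^(m-n) \<le> (1/2)^1"
    using False assms(1) by (intro power_decreasing) auto
  then have "a \<le> pi * (1/2)"
    unfolding a_def by (intro mult_left_mono) auto
  then have "a \<le> 2"
    using pi_less_4 by linarith
  have "0 < a"
    by (simp add: a_def)
  have "real K * a = 4 * pi"
    by (simp add: K_def a_def power_one_over)
  have "(2::real)^(m-n) = 2^m / 2^n"
    using assms(1) by (simp add: power_diff)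
  then have K_m: "real K * (1/2)^m = 4 * (1/2)^n"
    by (simp add: K_def power_one_over)
  have "measure lam {x\<in>space lam. dyadic_rate m x \<noteq> dyadic_rate n x} * real K
        \<le> measure lam {x\<in>space lam. a \<le> \<bar>(1/2)^m * dyadic_rate m x\<bar>} * real K"
    using dyadic_rate_disagreement[OF assms(1)] unfolding a_def by (rule mult_right_mono) simp
  also have "\<dots> \<le> (\<Sum>k=1..K. \<integral>x. (cmod (X (real k * (1/2)^m) x - 1))\<^sup>2 \<partial>lam)"
    using \<open>0 < a\<close> \<open>a \<le> 2\<close> \<open>real K * a = 4 * pi\<close> pi_gt3 by (intro large_angle_measure_le) auto
  also have "\<dots> \<le> (\<Sum>k=1..K. \<eta>)"
  proof (intro sum_mono L2)
    fix k assume "k \<in> {1..K}"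
    then show "0 < real k * (1/2)^m" "real k * (1/2)^m \<le> 4 * (1/2)^n"
      using mult_right_mono[of "real k" "real K" "(1/2::real)^m"] K_m by auto
  qed
  finally show ?thesis
    by (simp add: K_def)
qed

lemma dyadic_rate_Cauchy:
  assumes "\<eta> > 0"
  shows "\<exists>N. \<forall>n\<ge>N. \<forall>m\<ge>n. measure lam {x\<in>space lam. dyadic_rate m x \<noteq> dyadic_rate n x} \<le> \<eta>"
proof -
  obtain \<delta> where "\<delta> > 0"
    and \<delta>: "\<And>t. 0 < t \<Longrightarrow> t \<le> \<delta> \<Longrightarrow> (\<integral>x. (cmod (X t x - 1))\<^sup>2 \<partial>lam) \<le> \<eta>"
    using small_time_L2[OF assms] by blast
  obtain N where N: "(1/2::real)^N < \<delta>/4"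
    using real_arch_pow_inv[of "\<delta>/4" "1/2"] \<open>\<delta> > 0\<close> by auto
  have "measure lam {x\<in>space lam. dyadic_rate m x \<noteq> dyadic_rate n x} \<le> \<eta>"
    if "N \<le> n" "n \<le> m" for n m
  proof (rule dyadic_rate_disagreement_small[OF \<open>n \<le> m\<close> \<delta>])
    fix t :: real assume "0 < t" "t \<le> 4 * (1/2)^n"
    moreover have "(1/2::real)^n \<le> (1/2)^N"
      using \<open>N \<le> n\<close> by (intro power_decreasing) auto
    ultimately show "0 < t" "t \<le> \<delta>"
      using N by linarith+
  qed
  then show ?thesis
    by blast
qed

text \<open>Along levels \<open>r j\<close> on which the dyadic rates stabilise to \<open>G\<close>, we get \<open>X t = e^{itG}\<close>:
  the dyadic times \<open>t_k = \<lfloor>t 2^{r k}\<rfloor> 2^{-r k}\<close> tend to \<open>t\<close>, so \<open>X t_k\<close> tends in measure to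
  \<open>X t\<close> by continuity, while \<open>X t_k = e^{i t_k r_{r k}}\<close> tends almost everywhere to \<open>e^{itG}\<close>.\<close>
lemma X_eq_exp_of_stable_rates:
  assumes "strict_mono r" and [measurable]: "G \<in> borel_measurable lam"
    and stable: "AE x in lam. eventually (\<lambda>j. dyadic_rate (r j) x = G x) sequentially"
  shows "AE x in lam. X t x = exp (\<i> * of_real (t * G x))"
proof -
  define tk :: "nat \<Rightarrow> real" where "tk k = of_int \<lfloor>t * 2^(r k)\<rfloor> * (1/2)^(r k)" for k
  have tk_lim: "tk \<longlonglongrightarrow> t"
    unfolding tk_def using assms(1) by (rule dyadic_floor_tendsto)
  have exp_measurable: "(\<lambda>x. exp (\<i> * of_real (t * G x))) \<in> borel_measurable lam"
    by measurable
  have in_measure_X: "tendsto_in_measure (\<lambda>k. X (tk k)) (X t) sequentially"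
    using tendsto_in_measure_compose[OF tendsto_in_measure_at_imp_nhds[OF cont] tk_lim] .
  have "AE x in lam. \<forall>k. X (tk k) x = exp (\<i> * of_real (tk k * dyadic_rate (r k) x))"
    unfolding tk_def by (subst AE_all_countable) (intro allI X_dyadic_grid)
  then have "AE x in lam. (\<lambda>k. X (tk k) x) \<longlonglongrightarrow> exp (\<i> * of_real (t * G x))"
    using stable
  proof eventually_elim
    case (elim x)
    have "(\<lambda>k. exp (\<i> * of_real (tk k * G x))) \<longlonglongrightarrow> exp (\<i> * of_real (t * G x))"
      by (intro tendsto_intros tk_lim)
    moreover have "eventually (\<lambda>k. exp (\<i> * of_real (tk k * G x)) = X (tk k) x) sequentially"
      using elim(2) by eventually_elim (simp add: elim(1))
    ultimately show ?case
      by (rule Lim_transform_eventually)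
  qed
  then have "tendsto_in_measure (\<lambda>k. X (tk k)) (\<lambda>x. exp (\<i> * of_real (t * G x))) sequentially"
    by (rule AE_tendsto_imp_tendsto_in_measure[of "\<lambda>k. X (tk k)", OF X_measurable exp_measurable])
  from tendsto_in_measure_unique[OF X_measurable X_measurable exp_measurable _ in_measure_X this]
  show ?thesis
    by simp
qed

end

theorem lemma2p2:
  fixes X :: "real \<Rightarrow> real \<Rightarrow> complex"
  assumes rep: "\<And>t. L0T_rep (X t)"
    and hom: "\<And>s t. AE x in lam. X (s + t) x = X s x * X t x"
    and cont: "\<And>t. tendsto_in_measure X (X t) (at t)"
  shows "\<exists>g. g \<in> borel_measurable lam
           \<and> (\<forall>t. AE x in lam. X t x = expi (\<lambda>y. t * g y) x)
           \<and> (\<forall>h. h \<in> borel_measurable lam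
                  \<and> (\<forall>t. AE x in lam. X t x = expi (\<lambda>y. t * h y) x)
                  \<longrightarrow> (AE x in lam. h x = g x))"
proof -
  interpret L0T_one_parameter_subgroup X
    using rep hom cont by unfold_locales
  obtain r where "strict_mono r" and stable:
    "AE x in lam. eventually (\<lambda>j. dyadic_rate (r j) x = lim (\<lambda>j. dyadic_rate (r j) x)) sequentially"
    using lam.disagreement_Cauchy_imp_stable_subseq[OF dyadic_rate_measurable dyadic_rate_Cauchy]
    by blast
  define g where "g x = lim (\<lambda>j. dyadic_rate (r j) x)" for x
  have g_measurable: "g \<in> borel_measurable lam"
    unfolding g_def by measurable
  have X_exp: "AE x in lam. X t x = expi (\<lambda>y. t * g y) x" for t
    using X_eq_exp_of_stable_rates[OF \<open>strict_mono r\<close> g_measurable] stable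
    unfolding g_def expi_def by blast
  have "AE x in lam. h x = g x" if "\<forall>t. AE x in lam. X t x = expi (\<lambda>y. t * h y) x" for h
  proof (rule AE_exponent_unique)
    show "AE x in lam. exp (\<i> * of_real (t * h x)) = exp (\<i> * of_real (t * g x))" for t
      using that[rule_format, of t] X_exp[of t] by eventually_elim (simp add: expi_def)
  qed
  with g_measurable X_exp show ?thesis
    by blast
qed

end
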